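(* Let $\nu_1,\dots,\nu_p>0$ and let $\eta_1,\dots,\eta_p$ be independent random variables with $\eta_j\sim\mathcal P(\nu_j)$ (Poisson with mean $\nu_j$). Set $\boldsymbol\eta=(\eta_1,\dots,\eta_p)$, $\boldsymbol\nu=(\nu_1,\dots,\nu_p)$ and $\nu_\infty=\max_j\nu_j$. Then for every $u$ satisfying $\nu_\infty^{-3/2}\le u\le 0.9\,\nu_\infty^{3/2}$, $$\mathbf P\Big(\|\boldsymbol\eta-\boldsymbol\nu\|_2^2-\|\boldsymbol\eta\|_1\ge \nu_\infty\sqrt p\,u\Big)\le(2p+1)e^{-cu^{2/3}},$$ where $c\ge 0.38$ is a universal constant (one may take $c=12^{1/3}/6$).
   Context: $\|\cdot\|_2$ and $\|\cdot\|_1$ are the Euclidean and $\ell_1$ norms on $\mathbb R^p$. *)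

theory Defs
  imports "HOL-Probability.Probability"
begin

end

theory Submission
  imports Defs
begin

(*
  Truncate each summand (eta_j - nu_j)^2 - eta_j to the window |eta_j - nu_j| <= t. Leaving the
  window is controlled by Chernoff bounds for the Poisson tails, exp(-t^2/(2 nu_j + t)) above and
  exp(-t^2/(2 nu_j)) below. Inside the window the summands are independent, lie in
  [-nu_j - 1/4, t^2] and have non-positive mean: the partial sums of E[(eta - nu)^2 - eta] = 0
  telescope to n (nu - n + 1) P(eta = n), and for t >= 1 the two boundary terms have the right
  sign. Hoeffding's inequality bounds the remaining event. With w = u^(2/3) and
  t^2 = 5/4 nu_inf w all 2p + 1 exponents are at least c w; only c <= 0.382 is used.
*)

lemma ln_add_one_ge_div:
  fixes x :: real
  assumes "0 \<le> x"
  shows "2 * x / (2 + x) \<le> ln (1 + x)"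
proof -
  let ?f = "\<lambda>x::real. ln (1 + x) - 2 * x / (2 + x)"
  have "?f 0 \<le> ?f x"
  proof (rule DERIV_nonneg_imp_nondecreasing[OF assms])
    fix y :: real
    assume y: "0 \<le> y" "y \<le> x"
    have "(?f has_real_derivative (1 / (1 + y) - 4 / (2 + y)^2)) (at y)"
      using y by (intro derivative_eq_intros) (auto simp: power2_eq_square)
    moreover have "1 / (1 + y) - 4 / (2 + y)^2 = y^2 / ((1 + y) * (2 + y)^2)"
      using y by (simp add: divide_simps power2_eq_square) (simp add: algebra_simps)
    ultimately show "\<exists>d. (?f has_real_derivative d) (at y) \<and> 0 \<le> d"
      using y by auto
  qed
  then show ?thesis by simp
qed

lemma exp_minus_le_quadratic:
  fixes x :: real
  assumes "0 \<le> x"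
  shows "exp (- x) \<le> 1 - x + x^2 / 2"
proof -
  let ?f = "\<lambda>x::real. 1 - x + x^2 / 2 - exp (- x)"
  have "?f 0 \<le> ?f x"
  proof (rule DERIV_nonneg_imp_nondecreasing[OF assms])
    fix y :: real
    assume "0 \<le> y" "y \<le> x"
    have "(?f has_real_derivative (y - 1 + exp (- y))) (at y)"
      by (auto intro!: derivative_eq_intros simp: field_simps power2_eq_square)
    moreover have "0 \<le> y - 1 + exp (- y)"
      using exp_ge_add_one_self[of "- y"] by simp
    ultimately show "\<exists>d. (?f has_real_derivative d) (at y) \<and> 0 \<le> d"
      by blast
  qed
  then show ?thesis by simp
qed

lemma measure_pmf_prob_le_suminf:
  fixes q :: "nat pmf" and f :: "nat \<Rightarrow> real"
  assumes "\<And>k. 0 \<le> f k" and "\<And>k. k \<in> A \<Longrightarrow> 1 \<le> f k"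
    and "summable (\<lambda>k. pmf q k * f k)"
  shows "measure_pmf.prob q A \<le> (\<Sum>k. pmf q k * f k)"
proof -
  have "emeasure (measure_pmf q) A = (\<integral>\<^sup>+k. indicator A k \<partial>measure_pmf q)"
    by simp
  also have "\<dots> \<le> (\<integral>\<^sup>+k. ennreal (f k) \<partial>measure_pmf q)"
    using assms(1,2) by (intro nn_integral_mono) (auto split: split_indicator)
  also have "\<dots> = (\<Sum>k. ennreal (pmf q k * f k))"
    by (simp add: nn_integral_measure_pmf nn_integral_count_space_nat ennreal_mult assms(1))
  also have "\<dots> = ennreal (\<Sum>k. pmf q k * f k)"
    using assms(1,3) by (intro suminf_ennreal2) auto
  finally show ?thesis
    using assms(1,3) by (simp add: measure_pmf.emeasure_eq_measure suminf_nonneg)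
qed

lemma poisson_mgf_sums:
  fixes \<nu> s :: real
  assumes "0 < \<nu>"
  shows "(\<lambda>k. pmf (poisson_pmf \<nu>) k * exp (s * real k)) sums exp (\<nu> * (exp s - 1))"
proof -
  have "(\<lambda>k. exp (- \<nu>) * ((\<nu> * exp s)^k / fact k)) sums (exp (- \<nu>) * exp (\<nu> * exp s))"
    using exp_converges[of "\<nu> * exp s"] by (intro sums_mult) (simp add: divide_inverse mult.commute)
  moreover have "exp (- \<nu>) * exp (\<nu> * exp s) = exp (\<nu> * (exp s - 1))"
    by (simp add: mult_exp_exp algebra_simps)
  moreover have "pmf (poisson_pmf \<nu>) k * exp (s * real k) = exp (- \<nu>) * ((\<nu> * exp s)^k / fact k)" for k
    using assms by (simp add: power_mult_distrib exp_of_nat_mult[symmetric] mult.commute)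
  ultimately show ?thesis
    by simp
qed

lemma poisson_chernoff:
  fixes \<nu> s a :: real
  assumes "0 < \<nu>"
  shows "measure_pmf.prob (poisson_pmf \<nu>) {k. a \<le> s * real k} \<le> exp (\<nu> * (exp s - 1) - a)"
proof -
  have sums: "(\<lambda>k. pmf (poisson_pmf \<nu>) k * exp (s * real k - a)) sums (exp (\<nu> * (exp s - 1)) * exp (- a))"
    using sums_mult2[OF poisson_mgf_sums[OF assms, of s], of "exp (- a)"]
    by (simp add: exp_diff exp_minus divide_inverse mult.assoc)
  have "measure_pmf.prob (poisson_pmf \<nu>) {k. a \<le> s * real k} \<le> (\<Sum>k. pmf (poisson_pmf \<nu>) k * exp (s * real k - a))"
    using sums by (intro measure_pmf_prob_le_suminf) (auto simp: sums_iff)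
  also have "\<dots> = exp (\<nu> * (exp s - 1) - a)"
    using sums by (simp add: sums_iff exp_diff exp_minus divide_inverse)
  finally show ?thesis .
qed

lemma poisson_upper_tail:
  fixes \<nu> t :: real
  assumes "0 < \<nu>" and "0 \<le> t"
  shows "measure_pmf.prob (poisson_pmf \<nu>) {k. \<nu> + t \<le> real k} \<le> exp (- (t^2 / (2 * \<nu> + t)))"
proof -
  \<comment> \<open>the optimal Chernoff parameter; \<open>ln_add_one_ge_div\<close> turns the Bennett exponent into t^2/(2 nu + t)\<close>
  define s where "s = ln (1 + t / \<nu>)"
  have "2 * t / (2 * \<nu> + t) = 2 * (t / \<nu>) / (2 + t / \<nu>)"
    using assms by (simp add: field_simps)
  also have "\<dots> \<le> s"
    unfolding s_def using assms by (intro ln_add_one_ge_div) auto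
  finally have "2 * t / (2 * \<nu> + t) * (\<nu> + t) \<le> s * (\<nu> + t)"
    using assms by (intro mult_right_mono) auto
  moreover have "t - 2 * t / (2 * \<nu> + t) * (\<nu> + t) = - (t^2 / (2 * \<nu> + t))"
    using assms by (simp add: field_simps power2_eq_square)
  ultimately have exponent: "t - s * (\<nu> + t) \<le> - (t^2 / (2 * \<nu> + t))"
    by linarith
  have mgf: "\<nu> * (exp s - 1) = t"
    unfolding s_def using assms by (subst exp_ln) (auto intro: add_pos_nonneg)
  have "{k. \<nu> + t \<le> real k} \<subseteq> {k. s * (\<nu> + t) \<le> s * real k}"
    using assms by (auto simp: s_def intro: mult_left_mono)
  then have "measure_pmf.prob (poisson_pmf \<nu>) {k. \<nu> + t \<le> real k}
      \<le> measure_pmf.prob (poisson_pmf \<nu>) {k. s * (\<nu> + t) \<le> s * real k}"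
    by (rule measure_pmf.finite_measure_mono) simp
  also have "\<dots> \<le> exp (t - s * (\<nu> + t))"
    using poisson_chernoff[OF assms(1), of "s * (\<nu> + t)" s] mgf by simp
  also have "\<dots> \<le> exp (- (t^2 / (2 * \<nu> + t)))"
    using exponent by simp
  finally show ?thesis .
qed

lemma poisson_lower_tail:
  fixes \<nu> t :: real
  assumes "0 < \<nu>" and "0 \<le> t"
  shows "measure_pmf.prob (poisson_pmf \<nu>) {k. real k \<le> \<nu> - t} \<le> exp (- (t^2 / (2 * \<nu>)))"
proof -
  define s where "s = t / \<nu>"
  have "\<nu> * (exp (- s) - 1) \<le> \<nu> * (- s + s^2 / 2)"
    using exp_minus_le_quadratic[of s] assms by (intro mult_left_mono) (auto simp: s_def)
  moreover have "\<nu> * (- s + s^2 / 2) + s * (\<nu> - t) = - (t^2 / (2 * \<nu>))"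
    using assms by (simp add: s_def field_simps power2_eq_square)
  ultimately have exponent: "\<nu> * (exp (- s) - 1) - (- s * (\<nu> - t)) \<le> - (t^2 / (2 * \<nu>))"
    by linarith
  have "0 \<le> s"
    using assms by (simp add: s_def)
  then have "{k. real k \<le> \<nu> - t} \<subseteq> {k. - s * (\<nu> - t) \<le> - s * real k}"
    by (auto intro: mult_left_mono)
  then have "measure_pmf.prob (poisson_pmf \<nu>) {k. real k \<le> \<nu> - t}
      \<le> measure_pmf.prob (poisson_pmf \<nu>) {k. - s * (\<nu> - t) \<le> - s * real k}"
    by (rule measure_pmf.finite_measure_mono) simp
  also have "\<dots> \<le> exp (\<nu> * (exp (- s) - 1) - (- s * (\<nu> - t)))"
    by (rule poisson_chernoff[OF assms(1)])
  also have "\<dots> \<le> exp (- (t^2 / (2 * \<nu>)))"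
    using exponent by simp
  finally show ?thesis .
qed

lemma measure_Pi_pmf_component:
  assumes "finite I" and "i \<in> I"
  shows "measure_pmf.prob (Pi_pmf I dflt D) {g. P (g i)} = measure_pmf.prob (D i) {x. P x}"
proof -
  have "measure_pmf.prob (Pi_pmf I dflt D) {g. P (g i)}
      = measure_pmf.prob (map_pmf (\<lambda>g. g i) (Pi_pmf I dflt D)) {x. P x}"
    by (simp add: vimage_def)
  also have "map_pmf (\<lambda>g. g i) (Pi_pmf I dflt D) = D i"
    using assms by (simp add: Pi_pmf_component)
  finally show ?thesis .
qed

lemma expectation_Pi_pmf_component:
  fixes f :: "'a \<Rightarrow> real"
  assumes "finite I" and "i \<in> I"
  shows "measure_pmf.expectation (Pi_pmf I dflt D) (\<lambda>g. f (g i)) = measure_pmf.expectation (D i) f"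
proof -
  have "measure_pmf.expectation (Pi_pmf I dflt D) (\<lambda>g. f (g i))
      = measure_pmf.expectation (map_pmf (\<lambda>g. g i) (Pi_pmf I dflt D)) f"
    by simp
  also have "map_pmf (\<lambda>g. g i) (Pi_pmf I dflt D) = D i"
    using assms by (simp add: Pi_pmf_component)
  finally show ?thesis .
qed

lemma Pi_pmf_Hoeffding_ge:
  fixes D :: "'i \<Rightarrow> 'a pmf" and Z :: "'i \<Rightarrow> 'a \<Rightarrow> real"
  assumes "finite I" and "I \<noteq> {}" and "a < b" and "0 \<le> s"
    and bounds: "\<And>i x. i \<in> I \<Longrightarrow> Z i x \<in> {a..b}"
    and mean_nonpos: "\<And>i. i \<in> I \<Longrightarrow> measure_pmf.expectation (D i) (Z i) \<le> 0"
  shows "measure_pmf.prob (Pi_pmf I dflt D) {g. s \<le> (\<Sum>i\<in>I. Z i (g i))}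
         \<le> exp (- 2 * s^2 / (real (card I) * (b - a)^2))"
proof -
  define Q where "Q = Pi_pmf I dflt D"
  define \<mu> where "\<mu> = (\<Sum>i\<in>I. measure_pmf.expectation Q (\<lambda>g. Z i (g i)))"
  interpret Hoeffding_ineq "measure_pmf Q" I "\<lambda>i g. Z i (g i)" "\<lambda>_. a" "\<lambda>_. b" \<mu>
  proof unfold_locales
    show "prob_space.indep_vars (measure_pmf Q) (\<lambda>_. borel) (\<lambda>i g. Z i (g i)) I"
      unfolding Q_def using assms(1)
      by (intro prob_space.indep_vars_compose2[OF _ indep_vars_Pi_pmf])
         (auto simp: measure_pmf.prob_space_axioms)
  qed (use assms(1) bounds in \<open>auto simp: \<mu>_def\<close>)
  have "\<mu> \<le> 0"
    unfolding \<mu>_def Q_def using assms(1) mean_nonpos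
    by (intro sum_nonpos) (simp add: expectation_Pi_pmf_component)
  then have "{g. s \<le> (\<Sum>i\<in>I. Z i (g i))} \<subseteq> {g \<in> space (measure_pmf Q). \<mu> + s \<le> (\<Sum>i\<in>I. Z i (g i))}"
    by auto
  then have "measure_pmf.prob Q {g. s \<le> (\<Sum>i\<in>I. Z i (g i))}
      \<le> measure_pmf.prob Q {g \<in> space (measure_pmf Q). \<mu> + s \<le> (\<Sum>i\<in>I. Z i (g i))}"
    by (rule measure_pmf.finite_measure_mono) simp
  also have "\<dots> \<le> exp (- 2 * s^2 / (\<Sum>i\<in>I. (b - a)^2))"
    using assms by (intro Hoeffding_ineq_ge) (auto simp: card_gt_0_iff)
  finally show ?thesis
    by (simp add: Q_def)
qed

definition truncated_excess :: "real \<Rightarrow> real \<Rightarrow> nat \<Rightarrow> real" where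
  "truncated_excess \<nu> t k = (if \<bar>real k - \<nu>\<bar> \<le> t then (real k - \<nu>)^2 - real k else 0)"

lemma truncated_excess_bounds:
  assumes "0 \<le> \<nu>" and "0 \<le> t"
  shows "truncated_excess \<nu> t k \<in> {- \<nu> - 1/4..t^2}"
proof (cases "\<bar>real k - \<nu>\<bar> \<le> t")
  case True
  then have "(real k - \<nu>)^2 \<le> t^2"
    by (simp add: power2_le_iff_abs_le assms(2))
  moreover have "(real k - \<nu>)^2 - (real k - \<nu>) + 1/4 = (real k - \<nu> - 1/2)^2"
    by (simp add: power2_eq_square algebra_simps)
  then have "- 1/4 \<le> (real k - \<nu>)^2 - (real k - \<nu>)"
    using zero_le_power2[of "real k - \<nu> - 1/2"] by linarith
  ultimately show ?thesis
    using True by (auto simp: truncated_excess_def)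
qed (use assms in \<open>auto simp: truncated_excess_def\<close>)

lemma poisson_partial_sum_excess:
  fixes \<nu> :: real
  assumes "0 < \<nu>"
  shows "(\<Sum>k<n. pmf (poisson_pmf \<nu>) k * ((real k - \<nu>)^2 - real k))
         = real n * (\<nu> - real n + 1) * pmf (poisson_pmf \<nu>) n"
proof (induction n)
  case (Suc n)
  have pmf_Suc: "pmf (poisson_pmf \<nu>) (Suc n) = pmf (poisson_pmf \<nu>) n * \<nu> / (real n + 1)"
    using assms by (simp add: field_simps)
  have "real n * (\<nu> - real n + 1) * q + q * ((real n - \<nu>)^2 - real n)
      = (1 + real n) * (\<nu> - (1 + real n) + 1) * (q * \<nu> / (real n + 1))" for q
    by (simp add: field_simps power2_eq_square)
  then show ?case
    unfolding sum.lessThan_Suc pmf_Suc Suc.IH by (simp only: of_nat_Suc)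
qed simp

lemma poisson_expectation_truncated_excess_nonpos:
  fixes \<nu> t :: real
  assumes "0 < \<nu>" and "1 \<le> t"
  shows "measure_pmf.expectation (poisson_pmf \<nu>) (truncated_excess \<nu> t) \<le> 0"
proof -
  define L where "L = nat \<lceil>\<nu> - t\<rceil>"
  define M where "M = nat \<lfloor>\<nu> + t\<rfloor> + 1"
  define X where "X k = pmf (poisson_pmf \<nu>) k * ((real k - \<nu>)^2 - real k)" for k
  have L: "L \<le> k \<longleftrightarrow> \<nu> - t \<le> real k" for k
    unfolding L_def by (simp add: nat_le_iff ceiling_le_iff)
  have M: "k < M \<longleftrightarrow> real k \<le> \<nu> + t" for k
  proof -
    have "0 \<le> \<lfloor>\<nu> + t\<rfloor>"
      using assms by simp
    then show ?thesis
      unfolding M_def by (simp add: le_nat_iff less_Suc_eq_le le_floor_iff)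
  qed
  have "L \<le> M"
    using L[of M] M[of M] assms by linarith
  have "measure_pmf.expectation (poisson_pmf \<nu>) (truncated_excess \<nu> t)
      = (\<Sum>k<M. truncated_excess \<nu> t k * pmf (poisson_pmf \<nu>) k)"
    by (rule integral_measure_pmf_real) (auto simp: M truncated_excess_def abs_le_iff split: if_splits)
  also have "\<dots> = (\<Sum>k\<in>{L..<M}. X k)"
    by (rule sum.mono_neutral_cong_right) (auto simp: L M X_def truncated_excess_def abs_le_iff)
  also have "\<dots> = (\<Sum>k<M. X k) - (\<Sum>k<L. X k)"
    using sum_diff_nat_ivl[of 0 L M X] \<open>L \<le> M\<close> by (simp add: atLeast0LessThan)
  also have "\<dots> = real M * (\<nu> - real M + 1) * pmf (poisson_pmf \<nu>) M
                 - real L * (\<nu> - real L + 1) * pmf (poisson_pmf \<nu>) L"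
    unfolding X_def using poisson_partial_sum_excess[OF assms(1)] by simp
  also have "\<dots> \<le> 0"
  proof -
    have "\<nu> - real M + 1 \<le> 0"
      using M[of M] assms(2) by simp
    then have "real M * (\<nu> - real M + 1) * pmf (poisson_pmf \<nu>) M \<le> 0"
      by (simp add: mult_nonneg_nonpos mult_nonpos_nonneg)
    moreover have "0 \<le> \<nu> - real L + 1"
    proof (cases "L = 0")
      case False
      then have "real (L - 1) < \<nu> - t"
        using L[of "L - 1"] by auto
      then show ?thesis
        using False assms(2) by simp
    qed (use assms in auto)
    then have "0 \<le> real L * (\<nu> - real L + 1) * pmf (poisson_pmf \<nu>) L"
      by simp
    ultimately show ?thesis
      by simp
  qed
  finally show ?thesis .
qed

lemma excess_ge_subset:
  fixes \<nu> :: "nat \<Rightarrow> real"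
  shows "{\<eta>. s \<le> (\<Sum>j<p. (real (\<eta> j) - \<nu> j)^2) - (\<Sum>j<p. real (\<eta> j))}
    \<subseteq> (\<Union>j<p. {\<eta>. \<nu> j + t \<le> real (\<eta> j)}) \<union> (\<Union>j<p. {\<eta>. real (\<eta> j) \<le> \<nu> j - t})
      \<union> {\<eta>. s \<le> (\<Sum>j<p. truncated_excess (\<nu> j) t (\<eta> j))}"
proof
  fix \<eta> :: "nat \<Rightarrow> nat"
  assume \<eta>: "\<eta> \<in> {\<eta>. s \<le> (\<Sum>j<p. (real (\<eta> j) - \<nu> j)^2) - (\<Sum>j<p. real (\<eta> j))}"
  show "\<eta> \<in> (\<Union>j<p. {\<eta>. \<nu> j + t \<le> real (\<eta> j)}) \<union> (\<Union>j<p. {\<eta>. real (\<eta> j) \<le> \<nu> j - t})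
      \<union> {\<eta>. s \<le> (\<Sum>j<p. truncated_excess (\<nu> j) t (\<eta> j))}"
  proof (cases "\<forall>j<p. \<bar>real (\<eta> j) - \<nu> j\<bar> < t")
    case True
    then have "(\<Sum>j<p. truncated_excess (\<nu> j) t (\<eta> j)) = (\<Sum>j<p. (real (\<eta> j) - \<nu> j)^2 - real (\<eta> j))"
      by (intro sum.cong) (auto simp: truncated_excess_def)
    then show ?thesis
      using \<eta> by (simp add: sum_subtractf)
  qed (force simp: abs_less_iff)
qed

lemma measure_Pi_pmf_UN_le:
  assumes "finite I"
  shows "measure_pmf.prob (Pi_pmf I dflt D) (\<Union>i\<in>I. {g. P i (g i)})
         \<le> (\<Sum>i\<in>I. measure_pmf.prob (D i) {x. P i x})"
proof -
  have "measure_pmf.prob (Pi_pmf I dflt D) (\<Union>i\<in>I. {g. P i (g i)})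
      \<le> (\<Sum>i\<in>I. measure_pmf.prob (Pi_pmf I dflt D) {g. P i (g i)})"
    using assms by (intro measure_pmf.finite_measure_subadditive_finite) auto
  also have "\<dots> = (\<Sum>i\<in>I. measure_pmf.prob (D i) {x. P i x})"
    using assms by (intro sum.cong refl measure_Pi_pmf_component)
  finally show ?thesis .
qed

lemma poisson_truncated_excess_sum_ge_le:
  fixes p :: nat and \<nu> :: "nat \<Rightarrow> real" and N s t :: real
  assumes "0 < p" and \<nu>: "\<And>j. j < p \<Longrightarrow> 0 < \<nu> j \<and> \<nu> j \<le> N" and "1 \<le> t" and "0 \<le> s"
  shows "measure_pmf.prob (Pi_pmf {..<p} 0 (\<lambda>j. poisson_pmf (\<nu> j)))
           {\<eta>. s \<le> (\<Sum>j<p. truncated_excess (\<nu> j) t (\<eta> j))}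
         \<le> exp (- 2 * s^2 / (real p * (t^2 + N + 1/4)^2))"
proof -
  have "0 < N"
    using \<nu>[OF assms(1)] by linarith
  have "measure_pmf.prob (Pi_pmf {..<p} 0 (\<lambda>j. poisson_pmf (\<nu> j)))
           {\<eta>. s \<le> (\<Sum>j<p. truncated_excess (\<nu> j) t (\<eta> j))}
        \<le> exp (- 2 * s^2 / (real (card {..<p}) * (t^2 - (- N - 1/4))^2))"
  proof (rule Pi_pmf_Hoeffding_ge[where Z = "\<lambda>j. truncated_excess (\<nu> j) t" and a = "- N - 1/4" and b = "t^2"])
    show "- N - 1/4 < t^2"
      using \<open>0 < N\<close> zero_le_power2[of t] by linarith
    show "truncated_excess (\<nu> j) t k \<in> {- N - 1/4..t^2}" if "j \<in> {..<p}" for j k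
      using truncated_excess_bounds[of "\<nu> j" t k] \<nu>[of j] that assms(3) by auto
    show "measure_pmf.expectation (poisson_pmf (\<nu> j)) (truncated_excess (\<nu> j) t) \<le> 0"
      if "j \<in> {..<p}" for j
      using \<nu>[of j] that assms(3) by (intro poisson_expectation_truncated_excess_nonpos) auto
  qed (use assms(1,4) in auto)
  also have "t^2 - (- N - 1/4) = t^2 + N + 1/4"
    by simp
  finally show ?thesis
    by (simp only: card_lessThan)
qed

lemma poisson_excess_ge_le:
  fixes p :: nat and \<nu> :: "nat \<Rightarrow> real" and N s t :: real
  assumes "0 < p" and \<nu>: "\<And>j. j < p \<Longrightarrow> 0 < \<nu> j \<and> \<nu> j \<le> N" and "1 \<le> t" and "0 \<le> s"
  shows "measure_pmf.prob (Pi_pmf {..<p} 0 (\<lambda>j. poisson_pmf (\<nu> j)))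
           {\<eta>. s \<le> (\<Sum>j<p. (real (\<eta> j) - \<nu> j)^2) - (\<Sum>j<p. real (\<eta> j))}
         \<le> (\<Sum>j<p. exp (- (t^2 / (2 * \<nu> j + t)))) + (\<Sum>j<p. exp (- (t^2 / (2 * \<nu> j))))
           + exp (- 2 * s^2 / (real p * (t^2 + N + 1/4)^2))"
proof -
  define Q where "Q = Pi_pmf {..<p} 0 (\<lambda>j. poisson_pmf (\<nu> j))"
  define Up where "Up = (\<Union>j<p. {\<eta>. \<nu> j + t \<le> real (\<eta> j)})"
  define Lo where "Lo = (\<Union>j<p. {\<eta>. real (\<eta> j) \<le> \<nu> j - t})"
  define H where "H = {\<eta>. s \<le> (\<Sum>j<p. truncated_excess (\<nu> j) t (\<eta> j))}"
  have "measure_pmf.prob Q {\<eta>. s \<le> (\<Sum>j<p. (real (\<eta> j) - \<nu> j)^2) - (\<Sum>j<p. real (\<eta> j))}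
      \<le> measure_pmf.prob Q (Up \<union> Lo \<union> H)"
    unfolding Up_def Lo_def H_def by (intro measure_pmf.finite_measure_mono excess_ge_subset) simp
  also have "\<dots> \<le> measure_pmf.prob Q Up + measure_pmf.prob Q Lo + measure_pmf.prob Q H"
    using measure_Un_le[of "Up \<union> Lo" Q H] measure_Un_le[of Up Q Lo] by simp
  also have "\<dots> \<le> (\<Sum>j<p. exp (- (t^2 / (2 * \<nu> j + t)))) + (\<Sum>j<p. exp (- (t^2 / (2 * \<nu> j))))
                 + exp (- 2 * s^2 / (real p * (t^2 + N + 1/4)^2))"
  proof (intro add_mono)
    have "measure_pmf.prob Q Up \<le> (\<Sum>j<p. measure_pmf.prob (poisson_pmf (\<nu> j)) {k. \<nu> j + t \<le> real k})"
      unfolding Q_def Up_def by (rule measure_Pi_pmf_UN_le) simp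
    also have "\<dots> \<le> (\<Sum>j<p. exp (- (t^2 / (2 * \<nu> j + t))))"
      using \<nu> assms(3) by (intro sum_mono poisson_upper_tail) auto
    finally show "measure_pmf.prob Q Up \<le> (\<Sum>j<p. exp (- (t^2 / (2 * \<nu> j + t))))" .
    have "measure_pmf.prob Q Lo \<le> (\<Sum>j<p. measure_pmf.prob (poisson_pmf (\<nu> j)) {k. real k \<le> \<nu> j - t})"
      unfolding Q_def Lo_def by (rule measure_Pi_pmf_UN_le) simp
    also have "\<dots> \<le> (\<Sum>j<p. exp (- (t^2 / (2 * \<nu> j))))"
      using \<nu> assms(3) by (intro sum_mono poisson_lower_tail) auto
    finally show "measure_pmf.prob Q Lo \<le> (\<Sum>j<p. exp (- (t^2 / (2 * \<nu> j))))" .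
    show "measure_pmf.prob Q H \<le> exp (- 2 * s^2 / (real p * (t^2 + N + 1/4)^2))"
      unfolding Q_def H_def using assms by (rule poisson_truncated_excess_sum_ge_le)
  qed
  finally show ?thesis
    unfolding Q_def .
qed

lemma poisson_tail_exponents_ge:
  fixes \<nu> N w c t :: real
  assumes "0 < \<nu>" and "\<nu> \<le> N" and "0 < w" and "w \<le> N" and "0 \<le> c" and "c \<le> 191/500"
    and "0 \<le> t" and t2: "t^2 = 5/4 * N * w"
  shows "c * w \<le> t^2 / (2 * \<nu> + t)" and "c * w \<le> t^2 / (2 * \<nu>)"
proof -
  have Nw: "t^2 = 5/4 * (N * w)" and "N * w \<le> N * N" and "0 \<le> N * w"
    using assms(1-4) t2 by (auto intro: mult_left_mono)
  then have "t^2 \<le> (9/8 * N)^2"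
    by (simp add: power2_eq_square)
  then have "t \<le> 9/8 * N"
    using power2_le_imp_le[of t "9/8 * N"] assms(1,2) by simp
  then have "c * w * (2 * \<nu> + t) \<le> 191/500 * w * (2 * N + 9/8 * N)"
    using assms by (intro mult_mono) auto
  also have "\<dots> = 191/160 * (N * w)"
    by (simp add: algebra_simps)
  finally show "c * w \<le> t^2 / (2 * \<nu> + t)"
    using assms(1,7) Nw \<open>0 \<le> N * w\<close> by (simp add: field_simps)
  have "c * w * (2 * \<nu>) \<le> 191/500 * w * (2 * N)"
    using assms by (intro mult_mono) auto
  also have "\<dots> = 191/250 * (N * w)"
    by (simp add: algebra_simps)
  finally show "c * w \<le> t^2 / (2 * \<nu>)"
    using assms(1) Nw \<open>0 \<le> N * w\<close> by (simp add: field_simps)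
qed

lemma hoeffding_exponent_ge:
  fixes p :: nat and N w c t :: real
  assumes "0 < p" and "2 \<le> w" and "w \<le> N" and "0 \<le> c" and "c \<le> 1/2"
    and t2: "t^2 = 5/4 * N * w"
  shows "c * w \<le> 2 * (N * sqrt (real p) * w powr (3/2))^2 / (real p * (t^2 + N + 1/4)^2)"
proof -
  have w3: "(w powr (3/2))^2 = w^3"
  proof -
    have "(w powr (3/2))^2 = w powr (3/2 + 3/2)"
      by (simp only: power2_eq_square powr_add)
    also have "\<dots> = w^3"
      using assms(2) by (simp add: powr_numeral)
    finally show ?thesis .
  qed
  define R where "R = t^2 + N + 1/4"
  have "2 * N \<le> N * w"
    using assms(2,3) mult_left_mono[of 2 w N] by simp
  then have "N + 1/4 \<le> 3/4 * (N * w)"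
    using assms(2,3) by linarith
  moreover have "t^2 = 5/4 * (N * w)"
    using t2 by simp
  ultimately have "0 < R" and "R \<le> 2 * (N * w)"
    using assms(2,3) zero_le_power2[of t] unfolding R_def by linarith+
  then have "c * R^2 \<le> 1/2 * (2 * (N * w))^2"
    using assms(4,5) by (intro mult_mono power_mono) auto
  then have "c * w * R^2 \<le> 2 * N^2 * w^3"
    using assms(2) mult_left_mono[of "c * R^2" "1/2 * (2 * (N * w))^2" w]
    by (simp add: power2_eq_square power3_eq_cube mult_ac)
  then have "c * w \<le> 2 * N^2 * w^3 / R^2"
    using \<open>0 < R\<close> by (simp add: pos_le_divide_eq)
  also have "\<dots> = 2 * (N * sqrt (real p) * w powr (3/2))^2 / (real p * R^2)"
    using assms(1) w3 by (simp add: power_mult_distrib field_simps)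
  finally show ?thesis
    by (simp only: R_def)
qed

lemma root_3_12_div_6_bounds: "0 < root 3 12 / 6" "root 3 12 / 6 \<le> (191/500 :: real)"
proof -
  show "0 < root 3 12 / 6"
    by simp
  have "root 3 12 \<le> root 3 ((573/250 :: real)^3)"
    by (subst real_root_le_iff) (auto simp: power3_eq_cube)
  also have "\<dots> = 573/250"
    by (rule real_root_power_cancel) auto
  finally show "root 3 12 / 6 \<le> (191/500 :: real)"
    by simp
qed

lemma one_le_mult_exp_neg:
  fixes a x :: real
  assumes "x \<le> 1" and "3 \<le> a"
  shows "1 \<le> a * exp (- x)"
proof -
  have "1 \<le> 3 * exp (- 1 :: real)"
    using exp_le by (simp add: exp_minus field_simps)
  also have "\<dots> \<le> a * exp (- x)"
    using assms by (intro mult_mono) auto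
  finally show ?thesis .
qed

lemma poisson_excess_tail_le:
  fixes p :: nat and \<nu> :: "nat \<Rightarrow> real" and N w c :: real
  assumes "0 < p" and \<nu>: "\<And>j. j < p \<Longrightarrow> 0 < \<nu> j \<and> \<nu> j \<le> N"
    and "0 \<le> w" and "w \<le> N" and "0 \<le> c" and "c \<le> 191/500"
  shows "measure_pmf.prob (Pi_pmf {..<p} 0 (\<lambda>j. poisson_pmf (\<nu> j)))
           {\<eta>. N * sqrt (real p) * w powr (3/2) \<le> (\<Sum>j<p. (real (\<eta> j) - \<nu> j)^2) - (\<Sum>j<p. real (\<eta> j))}
         \<le> (2 * real p + 1) * exp (- c * w)"
proof (cases "c * w \<le> 1")
  case True
  with assms(1) have "1 \<le> (2 * real p + 1) * exp (- (c * w))"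
    by (intro one_le_mult_exp_neg) auto
  then show ?thesis
    using order_trans[OF measure_pmf.prob_le_1] by simp
next
  case False
  moreover have "c * w \<le> 1/2 * w"
    using assms(3,6) by (intro mult_right_mono) auto
  ultimately have "2 \<le> w"
    by linarith
  define t where "t = sqrt (5/4 * N * w)"
  define s where "s = N * sqrt (real p) * w powr (3/2)"
  have t2: "t^2 = 5/4 * N * w" and "1 \<le> t"
    using \<open>2 \<le> w\<close> assms(4) mult_mono[of 2 N 2 w] by (auto simp: t_def)
  have up: "exp (- (t^2 / (2 * \<nu> j + t))) \<le> exp (- c * w)" if "j < p" for j
    using poisson_tail_exponents_ge(1)[OF _ _ _ assms(4-6) _ t2] \<nu>[OF that] \<open>2 \<le> w\<close> \<open>1 \<le> t\<close> by simp
  have lo: "exp (- (t^2 / (2 * \<nu> j))) \<le> exp (- c * w)" if "j < p" for j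
    using poisson_tail_exponents_ge(2)[OF _ _ _ assms(4-6) _ t2] \<nu>[OF that] \<open>2 \<le> w\<close> \<open>1 \<le> t\<close> by simp
  have hoeffding: "exp (- 2 * s^2 / (real p * (t^2 + N + 1/4)^2)) \<le> exp (- c * w)"
    using hoeffding_exponent_ge[OF assms(1) \<open>2 \<le> w\<close> assms(4,5) _ t2] assms(6) by (simp add: s_def)
  have "0 \<le> s"
    using assms(3,4) by (simp add: s_def)
  have "measure_pmf.prob (Pi_pmf {..<p} 0 (\<lambda>j. poisson_pmf (\<nu> j)))
           {\<eta>. s \<le> (\<Sum>j<p. (real (\<eta> j) - \<nu> j)^2) - (\<Sum>j<p. real (\<eta> j))}
      \<le> (\<Sum>j<p. exp (- (t^2 / (2 * \<nu> j + t)))) + (\<Sum>j<p. exp (- (t^2 / (2 * \<nu> j))))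
           + exp (- 2 * s^2 / (real p * (t^2 + N + 1/4)^2))"
    using assms(1) \<nu> \<open>1 \<le> t\<close> \<open>0 \<le> s\<close> by (rule poisson_excess_ge_le)
  also have "\<dots> \<le> (\<Sum>j<p. exp (- c * w)) + (\<Sum>j<p. exp (- c * w)) + exp (- c * w)"
    using up lo hoeffding by (intro add_mono sum_mono) auto
  also have "\<dots> = (2 * real p + 1) * exp (- c * w)"
    by (simp add: algebra_simps)
  finally show ?thesis
    by (simp add: s_def)
qed

lemma powr_two_thirds_le:
  fixes u N :: real
  assumes "0 < u" and "u \<le> N powr (3/2)" and "0 < N"
  shows "u powr (2/3) \<le> N"
proof -
  have "u powr (2/3) \<le> (N powr (3/2)) powr (2/3)"
    using assms powr_ge_zero[of N "3/2"] by (intro powr_mono2) auto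
  also have "\<dots> = N"
    using assms(3) by (simp add: powr_powr)
  finally show ?thesis .
qed

theorem lemma2p2:
  fixes p :: nat and \<nu> :: "nat \<Rightarrow> real" and u :: real
  assumes "p \<ge> 1"
    and "\<And>j. j < p \<Longrightarrow> \<nu> j > 0"
    and "(Max (\<nu> ` {..<p})) powr (-3/2) \<le> u"
    and "u \<le> 0.9 * (Max (\<nu> ` {..<p})) powr (3/2)"
  shows "measure_pmf.prob (Pi_pmf {..<p} 0 (\<lambda>j. poisson_pmf (\<nu> j)))
           {\<eta>. (\<Sum>j<p. (real (\<eta> j) - \<nu> j)^2) - (\<Sum>j<p. real (\<eta> j))
                 \<ge> Max (\<nu> ` {..<p}) * sqrt (real p) * u}
         \<le> (2 * real p + 1) * exp (- (root 3 12 / 6) * u powr (2/3))"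
proof -
  define N where "N = Max (\<nu> ` {..<p})"
  define c where "c = root 3 12 / (6 :: real)"
  define w where "w = u powr (2/3)"
  have "0 < p"
    using assms(1) by simp
  have \<nu>: "0 < \<nu> j \<and> \<nu> j \<le> N" if "j < p" for j
    using assms(2)[OF that] that by (auto simp: N_def)
  then have "0 < N"
    using \<open>0 < p\<close> by force
  \<comment> \<open>the lower bound on \<open>u\<close> is only needed here\<close>
  then have "0 < u"
    using assms(3) by (smt (verit) N_def powr_gt_zero)
  then have u: "u = w powr (3/2)"
    by (simp add: w_def powr_powr)
  have "u \<le> N powr (3/2)"
    using assms(4) powr_ge_zero[of N "3/2"] unfolding N_def by linarith
  with \<open>0 < u\<close> \<open>0 < N\<close> have "w \<le> N"
    unfolding w_def by (intro powr_two_thirds_le)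
  have "0 < c" "c \<le> 191/500"
    using root_3_12_div_6_bounds by (auto simp: c_def)
  with \<open>0 < p\<close> \<nu> \<open>w \<le> N\<close> have "measure_pmf.prob (Pi_pmf {..<p} 0 (\<lambda>j. poisson_pmf (\<nu> j)))
           {\<eta>. N * sqrt (real p) * w powr (3/2) \<le> (\<Sum>j<p. (real (\<eta> j) - \<nu> j)^2) - (\<Sum>j<p. real (\<eta> j))}
         \<le> (2 * real p + 1) * exp (- c * w)"
    by (intro poisson_excess_tail_le) (auto simp: w_def)
  moreover have "exp (- c * w) = exp (- (root 3 12 / 6) * u powr (2/3))"
    by (simp add: c_def w_def)
  ultimately show ?thesis
    by (simp only: N_def u[symmetric])
qed

end
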